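(* Suppose $\tau_f\in(\tau_c,+\infty)$. Then $$p'(\tau)<\frac{2h(\tau)-2h(\tau_f)}{\tau^2-\tau_f^2}<p'(\tau_f)\quad\text{for }\tau\in(1,\tau_f).$$ Moreover, for any $\tau_b\in(1,\tau_f)$ Liu's extended entropy condition holds: $$\frac{2h(\tau_f)-2h(\tau_b)}{\tau_f^2-\tau_b^2}<\frac{2h(\tau_f)-2h(\tau)}{\tau_f^2-\tau^2}\quad\text{for all }\tau\in(\tau_b,\tau_f).$$
   Context: The pressure is $p(\tau)=\frac{\mathcal S}{(\tau-1)^\gamma}-\frac{1}{\tau^2}$ for $\tau>1$, with constants $1<\gamma<2$, $\mathcal S>0$, assumed such that there exist $1<\tau_1^i<\tau_2^i$ with $p'<0$ on $(1,\infty)$, $p''>0$ on $(1,\tau_1^i)\cup(\tau_2^i,\infty)$, $p''<0$ on $(\tau_1^i,\tau_2^i)$. The function $h$ satisfies $h'(\tau)=\tau p'(\tau)$. $\tau_c$ denotes the unique $\tau_c\in(\tau_1^i,\infty)$ with $p'(\tau_1^i)=\frac{2h(\tau_c)-2h(\tau_1^i)}{\tau_c^2-(\tau_1^i)^2}$. *)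

theory Defs
  imports "HOL-Analysis.Analysis"
begin

definition pres :: "real \<Rightarrow> real \<Rightarrow> real \<Rightarrow> real" where
  "pres S \<gamma> \<tau> = S / ((\<tau> - 1) powr \<gamma>) - 1 / \<tau>\<^sup>2"

end

theory Submission
  imports Defs
begin

text \<open>
  Write \<open>q = p'\<close>. Because \<open>h' = \<tau> q\<close>, the quotient \<open>(2 h a - 2 h b) / (a\<^sup>2 - b\<^sup>2)\<close> is the
  slope of a chord of \<open>s \<mapsto> 2 h (sqrt s)\<close>; hence it equals \<open>q \<xi>\<close> for some \<open>\<xi>\<close> between
  \<open>a\<close> and \<open>b\<close> (Cauchy's mean value theorem), and the slope over \<open>[a, c]\<close> is a weighted
  mean of the slopes over \<open>[a, b]\<close> and \<open>[b, c]\<close>.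

  The function \<open>q\<close> increases up to \<open>\<tau>1\<close>, decreases up to \<open>\<tau>2\<close> and increases afterwards.
  The defining equation of \<open>\<tau>c\<close> forces \<open>q\<close> to take the value \<open>q \<tau>1\<close> again at some
  \<open>\<eta> \<in> (\<tau>1, \<tau>c)\<close>, necessarily beyond \<open>\<tau>2\<close>, so \<open>q > q \<tau>1\<close> on \<open>(\<eta>, \<infinity>)\<close>. This gives
  \<open>q \<tau>1 < chord(\<tau>1, \<tau>f)\<close> and \<open>q < q \<tau>f\<close> on \<open>(1, \<tau>f)\<close>, and a case distinction on the
  monotonicity interval containing \<open>\<tau>\<close> yields \<open>q \<tau> < chord(\<tau>, \<tau>f) < q \<tau>f\<close>. Liu's
  condition follows since \<open>d/d\<tau> chord(\<tau>, \<tau>f) = 2 \<tau> (chord(\<tau>, \<tau>f) - q \<tau>) / (\<tau>f\<^sup>2 - \<tau>\<^sup>2)\<close>.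
\<close>

definition chord_slope :: "(real \<Rightarrow> real) \<Rightarrow> real \<Rightarrow> real \<Rightarrow> real" where
  "chord_slope h a b = (2 * h a - 2 * h b) / (a\<^sup>2 - b\<^sup>2)"

lemma chord_slope_commute: "chord_slope h a b = chord_slope h b a"
  unfolding chord_slope_def by (metis minus_diff_eq minus_divide_divide)

lemma chord_slope_mult: "a\<^sup>2 \<noteq> b\<^sup>2 \<Longrightarrow> (a\<^sup>2 - b\<^sup>2) * chord_slope h a b = 2 * h a - 2 * h b"
  unfolding chord_slope_def by simp

lemma chord_slope_mean_value:
  assumes "0 \<le> a" "a < b"
    and h_deriv: "\<And>t. a \<le> t \<Longrightarrow> t \<le> b \<Longrightarrow> (h has_real_derivative t * q t) (at t)"
  obtains \<xi> where "a < \<xi>" "\<xi> < b" "chord_slope h a b = q \<xi>"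
proof -
  have "\<exists>\<xi>. a < \<xi> \<and> \<xi> < b \<and> (2 * h b - 2 * h a) * (2 * \<xi>) = (b\<^sup>2 - a\<^sup>2) * (2 * (\<xi> * q \<xi>))"
    using h_deriv
    by (intro GMVT'[OF \<open>a < b\<close>]) (auto intro!: derivative_eq_intros DERIV_isCont)
  then obtain \<xi> where \<xi>: "a < \<xi>" "\<xi> < b"
    and cauchy: "(2 * h b - 2 * h a) * (2 * \<xi>) = (b\<^sup>2 - a\<^sup>2) * (2 * (\<xi> * q \<xi>))"
    by blast
  have "2 * \<xi> * (2 * h b - 2 * h a) = 2 * \<xi> * ((b\<^sup>2 - a\<^sup>2) * q \<xi>)"
    using cauchy by (simp add: algebra_simps)
  then have "2 * h b - 2 * h a = (b\<^sup>2 - a\<^sup>2) * q \<xi>"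
    using \<xi> \<open>0 \<le> a\<close> by simp
  moreover have "a\<^sup>2 < b\<^sup>2" using assms by (simp add: power_strict_mono)
  ultimately have "chord_slope h a b = q \<xi>"
    unfolding chord_slope_def by (simp add: field_simps)
  with \<xi> show thesis by (rule that)
qed

lemma chord_slope_split:
  assumes "a\<^sup>2 \<noteq> b\<^sup>2" "b\<^sup>2 \<noteq> c\<^sup>2" "a\<^sup>2 \<noteq> c\<^sup>2"
  shows "(c\<^sup>2 - a\<^sup>2) * chord_slope h a c
           = (b\<^sup>2 - a\<^sup>2) * chord_slope h a b + (c\<^sup>2 - b\<^sup>2) * chord_slope h b c"
  using assms chord_slope_mult[of a b h] chord_slope_mult[of b c h] chord_slope_mult[of a c h]
  by (simp add: algebra_simps)

lemma chord_slope_gt_if_parts_gt: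
  assumes "0 \<le> a" "a < b" "b < c"
    and "y \<le> chord_slope h a b" "y < chord_slope h b c"
  shows "y < chord_slope h a c"
proof -
  have sq: "a\<^sup>2 < b\<^sup>2" "b\<^sup>2 < c\<^sup>2"
    using assms by (simp_all add: power_strict_mono)
  have "(c\<^sup>2 - a\<^sup>2) * y = (b\<^sup>2 - a\<^sup>2) * y + (c\<^sup>2 - b\<^sup>2) * y"
    by (simp add: algebra_simps)
  also have "\<dots> < (b\<^sup>2 - a\<^sup>2) * chord_slope h a b + (c\<^sup>2 - b\<^sup>2) * chord_slope h b c"
    using sq assms by (intro add_le_less_mono mult_left_mono mult_strict_left_mono) auto
  also have "\<dots> = (c\<^sup>2 - a\<^sup>2) * chord_slope h a c"
    using sq by (intro chord_slope_split[symmetric]) auto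
  finally show ?thesis using sq by simp
qed

lemma chord_slope_right_part_gt:
  assumes "0 \<le> a" "a < b" "b < c"
    and "chord_slope h a b \<le> y" "y < chord_slope h a c"
  shows "y < chord_slope h b c"
proof (rule ccontr)
  assume "\<not> y < chord_slope h b c"
  have sq: "a\<^sup>2 < b\<^sup>2" "b\<^sup>2 < c\<^sup>2"
    using assms by (simp_all add: power_strict_mono)
  have "(c\<^sup>2 - a\<^sup>2) * chord_slope h a c
           = (b\<^sup>2 - a\<^sup>2) * chord_slope h a b + (c\<^sup>2 - b\<^sup>2) * chord_slope h b c"
    using sq by (intro chord_slope_split) auto
  also have "\<dots> \<le> (b\<^sup>2 - a\<^sup>2) * y + (c\<^sup>2 - b\<^sup>2) * y"
    using sq assms \<open>\<not> y < chord_slope h b c\<close> by (intro add_mono mult_left_mono) auto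
  also have "\<dots> = (c\<^sup>2 - a\<^sup>2) * y"
    by (simp add: algebra_simps)
  finally show False using sq assms by simp
qed

lemma has_real_derivative_chord_slope_left:
  assumes h_deriv: "(h has_real_derivative t * q t) (at t)" and "t\<^sup>2 \<noteq> f\<^sup>2"
  shows "((\<lambda>s. chord_slope h s f) has_real_derivative
           2 * t * (chord_slope h t f - q t) / (f\<^sup>2 - t\<^sup>2)) (at t)"
proof -
  have nz: "t\<^sup>2 - f\<^sup>2 \<noteq> 0" "f\<^sup>2 - t\<^sup>2 \<noteq> 0" using assms by auto
  have "((\<lambda>s. chord_slope h s f) has_real_derivative
           (2 * (t * q t) * (t\<^sup>2 - f\<^sup>2) - (2 * h t - 2 * h f) * (2 * t))
             / ((t\<^sup>2 - f\<^sup>2) * (t\<^sup>2 - f\<^sup>2))) (at t)"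
    unfolding chord_slope_def using assms
    by (auto intro!: derivative_eq_intros)
  also have "(2 * (t * q t) * (t\<^sup>2 - f\<^sup>2) - (2 * h t - 2 * h f) * (2 * t))
             / ((t\<^sup>2 - f\<^sup>2) * (t\<^sup>2 - f\<^sup>2)) = 2 * t * (chord_slope h t f - q t) / (f\<^sup>2 - t\<^sup>2)"
    using nz unfolding chord_slope_def by (simp add: divide_simps) algebra
  finally show ?thesis .
qed

lemma chord_slope_strict_mono_left:
  assumes "0 < b" "b < t" "t < f"
    and h_deriv: "\<And>s. b \<le> s \<Longrightarrow> s \<le> t \<Longrightarrow> (h has_real_derivative s * q s) (at s)"
    and q_less: "\<And>s. b < s \<Longrightarrow> s < t \<Longrightarrow> q s < chord_slope h s f"
  shows "chord_slope h b f < chord_slope h t f"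
proof -
  have sq: "s\<^sup>2 < f\<^sup>2" if "b \<le> s" "s \<le> t" for s
    using that assms by (simp add: power_strict_mono)
  have deriv: "((\<lambda>s. chord_slope h s f) has_real_derivative
                 2 * s * (chord_slope h s f - q s) / (f\<^sup>2 - s\<^sup>2)) (at s)"
    if "b \<le> s" "s \<le> t" for s
    using sq[OF that] by (intro has_real_derivative_chord_slope_left h_deriv that) simp
  show ?thesis
  proof (rule DERIV_pos_imp_increasing_open[OF \<open>b < t\<close>])
    fix s assume s: "b < s" "s < t"
    have "0 < 2 * s * (chord_slope h s f - q s) / (f\<^sup>2 - s\<^sup>2)"
      using s sq[of s] q_less[OF s] \<open>0 < b\<close> by (auto intro!: divide_pos_pos)
    with deriv[of s] s show "\<exists>y. ((\<lambda>s. chord_slope h s f) has_real_derivative y) (at s) \<and> y > 0"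
      by force
  qed (use deriv in \<open>auto intro!: continuous_at_imp_continuous_on DERIV_isCont\<close>)
qed

locale up_down_up =
  fixes q q' :: "real \<Rightarrow> real" and \<tau>1 \<tau>2 :: real
  assumes q_deriv: "\<And>t. 1 < t \<Longrightarrow> (q has_real_derivative q' t) (at t)"
    and \<tau>12: "1 < \<tau>1" "\<tau>1 < \<tau>2"
    and q'_pos_left: "\<And>t. 1 < t \<Longrightarrow> t < \<tau>1 \<Longrightarrow> 0 < q' t"
    and q'_neg: "\<And>t. \<tau>1 < t \<Longrightarrow> t < \<tau>2 \<Longrightarrow> q' t < 0"
    and q'_pos_right: "\<And>t. \<tau>2 < t \<Longrightarrow> 0 < q' t"
begin

lemma q_continuous_on: "1 < a \<Longrightarrow> continuous_on {a..b} q"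
  by (intro continuous_at_imp_continuous_on ballI DERIV_isCont[OF q_deriv]) auto

lemma q_less_if_q'_pos:
  assumes "1 < a" "a < b" "\<And>x. a < x \<Longrightarrow> x < b \<Longrightarrow> 0 < q' x"
  shows "q a < q b"
proof (rule DERIV_pos_imp_increasing_open[OF \<open>a < b\<close> _ q_continuous_on[OF \<open>1 < a\<close>]])
  fix x assume "a < x" "x < b"
  then show "\<exists>y. (q has_real_derivative y) (at x) \<and> 0 < y"
    using assms by (intro exI[of _ "q' x"] conjI q_deriv) auto
qed

lemma q_greater_if_q'_neg:
  assumes "1 < a" "a < b" "\<And>x. a < x \<Longrightarrow> x < b \<Longrightarrow> q' x < 0"
  shows "q b < q a"
proof (rule DERIV_neg_imp_decreasing_open[OF \<open>a < b\<close> _ q_continuous_on[OF \<open>1 < a\<close>]])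
  fix x assume "a < x" "x < b"
  then show "\<exists>y. (q has_real_derivative y) (at x) \<and> y < 0"
    using assms by (intro exI[of _ "q' x"] conjI q_deriv) auto
qed

lemma q_strict_mono_on_left: "1 < a \<Longrightarrow> a < b \<Longrightarrow> b \<le> \<tau>1 \<Longrightarrow> q a < q b"
  by (rule q_less_if_q'_pos) (auto intro: q'_pos_left)

lemma q_strict_antimono_on_middle: "\<tau>1 \<le> a \<Longrightarrow> a < b \<Longrightarrow> b \<le> \<tau>2 \<Longrightarrow> q b < q a"
  using \<tau>12 by (intro q_greater_if_q'_neg) (auto intro: q'_neg)

lemma q_strict_mono_on_right: "\<tau>2 \<le> a \<Longrightarrow> a < b \<Longrightarrow> q a < q b"
  using \<tau>12 by (intro q_less_if_q'_pos) (auto intro: q'_pos_right)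

lemma q_le_peak: "1 < s \<Longrightarrow> s \<le> \<tau>2 \<Longrightarrow> q s \<le> q \<tau>1"
  using q_strict_mono_on_left[of s \<tau>1] q_strict_antimono_on_middle[of \<tau>1 s]
  by (cases s \<tau>1 rule: linorder_cases) auto

lemma q_less_if_peak_less:
  assumes "q \<tau>1 < q f" "1 < s" "s < f"
  shows "q s < q f"
proof (cases "s \<le> \<tau>2")
  case True
  then show ?thesis using q_le_peak[of s] assms by simp
next
  case False
  then show ?thesis using q_strict_mono_on_right[of s f] assms by simp
qed

lemma peak_value_beyond_valley:
  assumes "\<tau>1 < \<eta>" "q \<eta> = q \<tau>1" "\<eta> < s"
  shows "q \<tau>1 < q s"
proof -
  have "\<tau>2 < \<eta>"
    using q_strict_antimono_on_middle[of \<tau>1 \<eta>] assms by force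
  then show ?thesis
    using q_strict_mono_on_right[of \<eta> s] assms by simp
qed

end

locale up_down_up_chords = up_down_up +
  fixes h :: "real \<Rightarrow> real"
  assumes h_deriv: "\<And>t. 1 < t \<Longrightarrow> (h has_real_derivative t * q t) (at t)"
begin

lemma chord_slope_mean_value_q:
  assumes "1 < a" "a < b"
  obtains \<xi> where "a < \<xi>" "\<xi> < b" "chord_slope h a b = q \<xi>"
  by (rule chord_slope_mean_value[of a b h q]) (use assms h_deriv in auto)

lemma peak_less_beyond_critical_chord:
  assumes "\<tau>1 < \<tau>c" "chord_slope h \<tau>1 \<tau>c = q \<tau>1" "\<tau>c < f"
  shows "q \<tau>1 < chord_slope h \<tau>1 f" and "q \<tau>1 < q f"
proof -
  obtain \<eta> where \<eta>: "\<tau>1 < \<eta>" "\<eta> < \<tau>c" "q \<eta> = q \<tau>1"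
    using chord_slope_mean_value_q[OF \<tau>12(1) assms(1)] assms(2) by metis
  obtain \<xi> where \<xi>: "\<tau>c < \<xi>" "\<xi> < f" "chord_slope h \<tau>c f = q \<xi>"
    using chord_slope_mean_value_q[OF _ assms(3)] \<tau>12 assms(1) by auto
  have "q \<tau>1 < chord_slope h \<tau>c f"
    using peak_value_beyond_valley[OF \<eta>(1,3)] \<eta>(2) \<xi> by simp
  with assms \<tau>12 show "q \<tau>1 < chord_slope h \<tau>1 f"
    by (intro chord_slope_gt_if_parts_gt[of \<tau>1 \<tau>c]) auto
  show "q \<tau>1 < q f"
    using peak_value_beyond_valley[OF \<eta>(1,3)] \<eta>(2) assms(3) by simp
qed

lemma q_less_chord_slope_if_increasing:
  assumes "1 < t" "t < f" "f \<le> \<tau>1 \<or> \<tau>2 \<le> t"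
  shows "q t < chord_slope h t f"
proof -
  obtain \<xi> where "t < \<xi>" "\<xi> < f" "chord_slope h t f = q \<xi>"
    using chord_slope_mean_value_q assms by metis
  with assms show ?thesis
    using q_strict_mono_on_left[of t \<xi>] q_strict_mono_on_right[of t \<xi>] by auto
qed

lemma q_less_chord_slope:
  assumes peak: "q \<tau>1 < chord_slope h \<tau>1 f" and "\<tau>1 < f" "1 < t" "t < f"
  shows "q t < chord_slope h t f"
proof -
  consider "t < \<tau>1" | "t = \<tau>1" | "\<tau>1 < t" "t < \<tau>2" | "\<tau>2 \<le> t" by linarith
  then show ?thesis
  proof cases
    case 1
    have "q t < chord_slope h t \<tau>1"
      using q_less_chord_slope_if_increasing[OF \<open>1 < t\<close> 1] by simp
    moreover have "q t < chord_slope h \<tau>1 f"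
      using q_strict_mono_on_left[OF \<open>1 < t\<close> 1 order_refl] peak by simp
    ultimately show ?thesis
      using assms 1 by (intro chord_slope_gt_if_parts_gt[of t \<tau>1]) auto
  next
    case 2
    then show ?thesis using peak by simp
  next
    case 3
    obtain \<xi> where \<xi>: "\<tau>1 < \<xi>" "\<xi> < t" "chord_slope h \<tau>1 t = q \<xi>"
      using chord_slope_mean_value_q[OF \<tau>12(1) 3(1)] by metis
    have "chord_slope h \<tau>1 t \<le> q \<tau>1"
      using q_strict_antimono_on_middle[of \<tau>1 \<xi>] \<xi> 3 by simp
    then have "q \<tau>1 < chord_slope h t f"
      using peak assms 3 \<tau>12 by (intro chord_slope_right_part_gt[of \<tau>1 t]) auto
    moreover have "q t < q \<tau>1" using q_strict_antimono_on_middle[of \<tau>1 t] 3 by simp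
    ultimately show ?thesis by simp
  next
    case 4
    then show ?thesis using q_less_chord_slope_if_increasing assms(3,4) by blast
  qed
qed

lemma chord_slope_less_q:
  assumes "q \<tau>1 < q f" "1 < t" "t < f"
  shows "chord_slope h t f < q f"
proof -
  obtain \<xi> where "t < \<xi>" "\<xi> < f" "chord_slope h t f = q \<xi>"
    using chord_slope_mean_value_q assms(2,3) by metis
  with assms show ?thesis using q_less_if_peak_less[of f \<xi>] by simp
qed

end

lemma pres_eq: "1 < t \<Longrightarrow> pres S g t = S * (t - 1) powr (- g) - 1 / t\<^sup>2"
  by (simp add: pres_def powr_minus divide_inverse)

lemma pres_has_real_derivative:
  assumes "1 < t"
  shows "(pres S g has_real_derivative - S * g * (t - 1) powr (- g - 1) + 2 / t ^ 3) (at t)"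
proof -
  have "((\<lambda>x. S * (x - 1) powr (- g) - 1 / x\<^sup>2) has_real_derivative
          - S * g * (t - 1) powr (- g - 1) + 2 / t ^ 3) (at t)"
    using assms by (auto intro!: derivative_eq_intros simp: field_simps eval_nat_numeral)
  then show ?thesis
    by (rule has_field_derivative_transform_within_open[where S = "{1<..}"])
      (use assms in \<open>auto simp: pres_eq\<close>)
qed

lemma deriv_pres_has_real_derivative:
  assumes "1 < t"
  shows "(deriv (pres S g) has_real_derivative deriv (deriv (pres S g)) t) (at t)"
proof -
  have "((\<lambda>x. - S * g * (x - 1) powr (- g - 1) + 2 / x ^ 3) has_real_derivative
          S * g * (g + 1) * (t - 1) powr (- g - 2) - 6 / t ^ 4) (at t)"
    using assms by (auto intro!: derivative_eq_intros simp: field_simps eval_nat_numeral)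
  then have "(deriv (pres S g) has_real_derivative
               S * g * (g + 1) * (t - 1) powr (- g - 2) - 6 / t ^ 4) (at t)"
    by (rule has_field_derivative_transform_within_open[where S = "{1<..}"])
      (use assms DERIV_imp_deriv[OF pres_has_real_derivative] in auto)
  then show ?thesis
    using DERIV_imp_deriv by metis
qed

theorem proposition3p2:
  fixes S \<gamma> \<tau>1 \<tau>2 \<tau>c \<tau>f :: real and h :: "real \<Rightarrow> real"
  defines "p \<equiv> pres S \<gamma>"
  assumes gamma: "1 < \<gamma>" "\<gamma> < 2"
    and S_pos: "0 < S"
    and tau12: "1 < \<tau>1" "\<tau>1 < \<tau>2"
    and p1_neg: "\<forall>\<tau>>1. deriv p \<tau> < 0"
    and p2_pos1: "\<forall>\<tau>. 1 < \<tau> \<and> \<tau> < \<tau>1 \<longrightarrow> deriv (deriv p) \<tau> > 0"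
    and p2_pos2: "\<forall>\<tau>>\<tau>2. deriv (deriv p) \<tau> > 0"
    and p2_neg: "\<forall>\<tau>. \<tau>1 < \<tau> \<and> \<tau> < \<tau>2 \<longrightarrow> deriv (deriv p) \<tau> < 0"
    and h_deriv: "\<forall>\<tau>>1. (h has_real_derivative \<tau> * deriv p \<tau>) (at \<tau>)"
    and tauc: "\<tau>1 < \<tau>c"
      "deriv p \<tau>1 = (2 * h \<tau>c - 2 * h \<tau>1) / (\<tau>c\<^sup>2 - \<tau>1\<^sup>2)"
    and tauc_unique: "\<forall>t>\<tau>1. deriv p \<tau>1 = (2 * h t - 2 * h \<tau>1) / (t\<^sup>2 - \<tau>1\<^sup>2) \<longrightarrow> t = \<tau>c"
    and tauf: "\<tau>c < \<tau>f"
  shows "(\<forall>\<tau>. 1 < \<tau> \<and> \<tau> < \<tau>f \<longrightarrow>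
            deriv p \<tau> < (2 * h \<tau> - 2 * h \<tau>f) / (\<tau>\<^sup>2 - \<tau>f\<^sup>2) \<and>
            (2 * h \<tau> - 2 * h \<tau>f) / (\<tau>\<^sup>2 - \<tau>f\<^sup>2) < deriv p \<tau>f)
       \<and> (\<forall>\<tau>b. 1 < \<tau>b \<and> \<tau>b < \<tau>f \<longrightarrow>
            (\<forall>\<tau>. \<tau>b < \<tau> \<and> \<tau> < \<tau>f \<longrightarrow>
               (2 * h \<tau>f - 2 * h \<tau>b) / (\<tau>f\<^sup>2 - \<tau>b\<^sup>2) < (2 * h \<tau>f - 2 * h \<tau>) / (\<tau>f\<^sup>2 - \<tau>\<^sup>2)))"
proof -
  interpret up_down_up_chords "deriv p" "deriv (deriv p)" \<tau>1 \<tau>2 h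
    by unfold_locales
      (use deriv_pres_has_real_derivative tau12 p2_pos1 p2_pos2 p2_neg h_deriv in \<open>auto simp: p_def\<close>)
  have "chord_slope h \<tau>1 \<tau>c = deriv p \<tau>1"
    using tauc(2) by (metis chord_slope_commute chord_slope_def)
  then have peak_chord: "deriv p \<tau>1 < chord_slope h \<tau>1 \<tau>f"
    and peak_q: "deriv p \<tau>1 < deriv p \<tau>f"
    using peak_less_beyond_critical_chord tauc(1) tauf by blast+
  have lower: "deriv p t < chord_slope h t \<tau>f" if "1 < t" "t < \<tau>f" for t
    using q_less_chord_slope[OF peak_chord _ that] tauc(1) tauf by simp
  have upper: "chord_slope h t \<tau>f < deriv p \<tau>f" if "1 < t" "t < \<tau>f" for t
    using chord_slope_less_q[OF peak_q that] .
  have liu: "chord_slope h \<tau>f b < chord_slope h \<tau>f t" if "1 < b" "b < t" "t < \<tau>f" for b t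
    using chord_slope_strict_mono_left[of b t \<tau>f h "deriv p"] that lower h_deriv
    by (simp add: chord_slope_commute[of h \<tau>f])
  show ?thesis
    using lower upper liu unfolding chord_slope_def by blast
qed

end
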